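(* Let $V$ be a finite set of variables and $\mathcal C=\{C_1,\dots,C_m\}$ a set of betweenness constraints over $V$. Let $\phi:V\to\{0,1,2,3\}$ be chosen uniformly at random and let $X=w(\mathcal C,\phi)$. Then $X$ can be expressed as a polynomial of degree $6$ in independent random variables, each uniformly distributed on $\{-1,1\}$.
   Context: A betweenness constraint is $(v_i,\{v_j,v_k\})$ with $v_i,v_j,v_k\in V$ distinct; a bijection $\alpha:V\to\{1,\dots,|V|\}$ satisfies it if $\alpha(v_j)<\alpha(v_i)<\alpha(v_k)$ or $\alpha(v_k)<\alpha(v_i)<\alpha(v_j)$. For $\phi:V\to\{0,1,2,3\}$ let $\ell_i(\phi)=|\phi^{-1}(i)|$. A random $\phi$-compatible bijection $\alpha$ is obtained by assigning, uniformly at random, the values $\sum_{i<j}\ell_i(\phi)+1,\dots,\sum_{i\le j}\ell_i(\phi)$ bijectively to the variables $v$ with $\phi(v)=j$, for each $j=0,1,2,3$. For a constraint $C_p$ let $\nu_p(\alpha)=1$ if $\alpha$ satisfies $C_p$ and $0$ otherwise; define $w(C_p,\phi)=\mathbb E[\nu_p(\alpha)]-1/3$, the expectation over a random $\phi$-compatible bijection $\alpha$ for fixed $\phi$, and $w(\mathcal C,\phi)=\sum_{p=1}^m w(C_p,\phi)$. *)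

theory Defs
  imports Complex_Main "HOL-Library.FuncSet"
begin

(* A betweenness constraint (vi, vj, vk) stands for (v_i, {v_j, v_k}). *)
type_synonym 'v constr = "'v \<times> 'v \<times> 'v"

definition ell :: "'v set \<Rightarrow> ('v \<Rightarrow> nat) \<Rightarrow> nat \<Rightarrow> nat" where
  "ell V phi i = card {v \<in> V. phi v = i}"

definition lo :: "'v set \<Rightarrow> ('v \<Rightarrow> nat) \<Rightarrow> nat \<Rightarrow> nat" where
  "lo V phi j = (\<Sum>i<j. ell V phi i)"

definition compat_bij :: "'v set \<Rightarrow> ('v \<Rightarrow> nat) \<Rightarrow> ('v \<Rightarrow> nat) set" where
  "compat_bij V phi = {alpha \<in> V \<rightarrow>\<^sub>E UNIV.
      bij_betw alpha V {1..card V} \<and>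
      (\<forall>v\<in>V. lo V phi (phi v) < alpha v \<and> alpha v \<le> lo V phi (phi v) + ell V phi (phi v))}"

definition satisfies :: "('v \<Rightarrow> nat) \<Rightarrow> 'v constr \<Rightarrow> bool" where
  "satisfies alpha C = (case C of (vi, vj, vk) \<Rightarrow>
      (alpha vj < alpha vi \<and> alpha vi < alpha vk) \<or> (alpha vk < alpha vi \<and> alpha vi < alpha vj))"

definition wC :: "'v set \<Rightarrow> ('v \<Rightarrow> nat) \<Rightarrow> 'v constr \<Rightarrow> real" where
  "wC V phi C = real (card {alpha \<in> compat_bij V phi. satisfies alpha C}) / real (card (compat_bij V phi)) - 1/3"

definition wCs :: "'v set \<Rightarrow> ('v \<Rightarrow> nat) \<Rightarrow> 'v constr list \<Rightarrow> real" where
  "wCs V phi Cs = (\<Sum>C\<leftarrow>Cs. wC V phi C)"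

end

theory Submission
  imports Defs "HOL-Combinatorics.Transposition"
begin

text \<open>The value \<open>w(C, \<phi>)\<close> of a constraint \<open>C = (x, {y, z})\<close> depends only on the labels
  \<open>\<phi> x, \<phi> y, \<phi> z\<close>: a compatible bijection orders distinct blocks by their labels, so a variable
  whose label is extreme is never in the middle, while transposing two variables of one block
  permutes the compatible bijections, so variables with equal labels are in the middle equally
  often. Since the three middle events partition the compatible bijections, this pins the
  probability down to \<open>1/3\<close>, \<open>1/2\<close>, \<open>0\<close> or \<open>1\<close>. Encoding each label in \<open>{0..3}\<close> by two
  \<open>\<plusminus>1\<close> bits, \<open>w(C, \<cdot>)\<close> is a function of six \<open>\<plusminus>1\<close> variables and hence a multilinear
  polynomial of degree at most 6 in them; \<open>w(\<C>, \<cdot>)\<close> is a sum of such polynomials.\<close>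

lemma prod_pm_one_indicator:
  fixes x y :: "'a \<Rightarrow> real"
  assumes "finite T" and "\<forall>i\<in>T. x i \<in> {-1, 1}" and "y \<in> T \<rightarrow>\<^sub>E {-1, 1}"
  shows "(\<Prod>i\<in>T. (1 + x i * y i) / 2) = (if y = restrict x T then 1 else 0)"
proof (cases "y = restrict x T")
  case True
  with assms(2) have "\<forall>i\<in>T. (1 + x i * y i) / 2 = 1" by auto
  with True show ?thesis by simp
next
  case False
  then obtain i where "i \<in> T" "y i \<noteq> x i"
    using assms(3) by (auto simp: fun_eq_iff PiE_def extensional_def split: if_splits)
  moreover have "y i \<in> {-1, 1}" using assms(3) \<open>i \<in> T\<close> by (rule PiE_mem)
  ultimately have "(1 + x i * y i) / 2 = 0" using assms(2) by auto
  with \<open>i \<in> T\<close> False assms(1) show ?thesis by (auto intro: prod_zero)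
qed

text \<open>Expand the interpolation formula \<open>f x = \<Sum>\<^sub>y f y \<Prod>\<^sub>i\<^sub>\<in>\<^sub>T (1 + x\<^sub>i y\<^sub>i)/2\<close>, the sum
  running over the sign vectors \<open>y\<close> on \<open>T\<close>.\<close>
lemma multilinear_expansion:
  fixes f :: "('a \<Rightarrow> real) \<Rightarrow> real"
  assumes "finite T" and dep: "\<And>x y. (\<forall>i\<in>T. x i = y i) \<Longrightarrow> f x = f y"
  obtains c where "\<And>x. \<forall>i\<in>T. x i \<in> {-1, 1} \<Longrightarrow> f x = (\<Sum>S\<in>Pow T. c S * (\<Prod>i\<in>S. x i))"
proof -
  define Y where "Y = T \<rightarrow>\<^sub>E {-1, 1::real}"
  have "finite Y" unfolding Y_def using \<open>finite T\<close> by (simp add: finite_PiE)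
  define c where "c S = (\<Sum>y\<in>Y. f y * (\<Prod>i\<in>S. y i / 2) * (\<Prod>i\<in>T - S. 1 / 2))" for S
  have "f x = (\<Sum>S\<in>Pow T. c S * (\<Prod>i\<in>S. x i))" if x: "\<forall>i\<in>T. x i \<in> {-1, 1}" for x
  proof -
    have prod_times_half: "(\<Prod>i\<in>S. x i * y i / 2) = (\<Prod>i\<in>S. x i) * (\<Prod>i\<in>S. y i / 2)" for S y
      by (simp add: prod.distrib[symmetric])
    from x have "restrict x T \<in> Y" by (auto simp: Y_def)
    have "f x = f (restrict x T)" using dep by simp
    also have "\<dots> = (\<Sum>y\<in>Y. f y * (if y = restrict x T then 1 else 0))"
      using \<open>finite Y\<close> \<open>restrict x T \<in> Y\<close> by (simp add: if_distrib sum.delta' cong: if_cong)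
    also have "\<dots> = (\<Sum>y\<in>Y. f y * (\<Prod>i\<in>T. (1 + x i * y i) / 2))"
      by (intro sum.cong refl) (simp add: Y_def prod_pm_one_indicator[OF \<open>finite T\<close> x])
    also have "\<dots> = (\<Sum>y\<in>Y. f y * (\<Prod>i\<in>T. x i * y i / 2 + 1 / 2))"
      by (simp add: add_divide_distrib add.commute)
    also have "\<dots> = (\<Sum>y\<in>Y. f y * (\<Sum>S\<in>Pow T. (\<Prod>i\<in>S. x i * y i / 2) * (\<Prod>i\<in>T - S. 1 / 2)))"
      by (simp only: prod_add[OF \<open>finite T\<close>])
    also have "\<dots> = (\<Sum>y\<in>Y. \<Sum>S\<in>Pow T. (\<Prod>i\<in>S. x i) * (f y * (\<Prod>i\<in>S. y i / 2) * (\<Prod>i\<in>T - S. 1 / 2)))"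
      by (simp only: prod_times_half sum_distrib_left) (simp add: mult_ac)
    also have "\<dots> = (\<Sum>S\<in>Pow T. c S * (\<Prod>i\<in>S. x i))"
      unfolding c_def by (subst sum.swap) (simp add: sum_distrib_left mult_ac)
    finally show ?thesis .
  qed
  then show ?thesis by (rule that)
qed

definition multilinear_le ::
    "'i set \<Rightarrow> nat \<Rightarrow> ('a \<Rightarrow> 'i \<Rightarrow> real) \<Rightarrow> 'a set \<Rightarrow> ('a \<Rightarrow> real) \<Rightarrow> bool" where
  "multilinear_le I d enc A f \<longleftrightarrow>
     (\<exists>c. \<forall>a\<in>A. f a = (\<Sum>S\<in>{S. S \<subseteq> I \<and> card S \<le> d}. c S * (\<Prod>i\<in>S. enc a i)))"

lemma multilinear_le_sum_list:
  assumes "\<forall>x\<in>set xs. multilinear_le I d enc A (f x)"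
  shows "multilinear_le I d enc A (\<lambda>a. \<Sum>x\<leftarrow>xs. f x a)"
  using assms
proof (induction xs)
  case Nil
  show ?case unfolding multilinear_le_def by (rule exI[of _ "\<lambda>_. 0"]) simp
next
  case (Cons x xs)
  then obtain c1 c2 where
    "\<forall>a\<in>A. f x a = (\<Sum>S\<in>{S. S \<subseteq> I \<and> card S \<le> d}. c1 S * (\<Prod>i\<in>S. enc a i))"
    "\<forall>a\<in>A. (\<Sum>x\<leftarrow>xs. f x a) = (\<Sum>S\<in>{S. S \<subseteq> I \<and> card S \<le> d}. c2 S * (\<Prod>i\<in>S. enc a i))"
    unfolding multilinear_le_def by auto
  then show ?case unfolding multilinear_le_def
    by (intro exI[of _ "\<lambda>S. c1 S + c2 S"]) (simp add: distrib_right sum.distrib)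
qed

lemma multilinear_le_of_depends_on:
  fixes g :: "('i \<Rightarrow> real) \<Rightarrow> real"
  assumes "finite I" "T \<subseteq> I" "card T \<le> d"
    and pm: "\<And>a i. a \<in> A \<Longrightarrow> i \<in> T \<Longrightarrow> enc a i \<in> {-1, 1}"
    and dep: "\<And>x y. (\<forall>i\<in>T. x i = y i) \<Longrightarrow> g x = g y"
    and f: "\<And>a. a \<in> A \<Longrightarrow> f a = g (enc a)"
  shows "multilinear_le I d enc A f"
proof -
  have "finite T" using assms(1,2) by (rule finite_subset[rotated])
  obtain c where c: "\<And>x. \<forall>i\<in>T. x i \<in> {-1, 1} \<Longrightarrow> g x = (\<Sum>S\<in>Pow T. c S * (\<Prod>i\<in>S. x i))"
    using multilinear_expansion[of T g, OF \<open>finite T\<close> dep] by blast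
  define F where "F = {S. S \<subseteq> I \<and> card S \<le> d}"
  have "finite F" using \<open>finite I\<close> by (simp add: F_def)
  have "Pow T \<subseteq> F"
    using assms(2,3) \<open>finite T\<close> by (auto simp: F_def dest: card_mono)
  show ?thesis unfolding multilinear_le_def F_def[symmetric]
  proof (intro exI ballI)
    fix a assume "a \<in> A"
    then have "f a = (\<Sum>S\<in>Pow T. c S * (\<Prod>i\<in>S. enc a i))"
      using f c pm by simp
    also have "\<dots> = (\<Sum>S\<in>F. (if S \<subseteq> T then c S else 0) * (\<Prod>i\<in>S. enc a i))"
      using \<open>finite F\<close> \<open>Pow T \<subseteq> F\<close> by (intro sum.mono_neutral_cong_left) auto
    finally show "f a = \<dots>" .
  qed
qed

lemma lo_add_ell_le:
  assumes "j < k" shows "lo V phi j + ell V phi j \<le> lo V phi k"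
proof -
  have "lo V phi j + ell V phi j = lo V phi (Suc j)" by (simp add: lo_def)
  also have "\<dots> \<le> lo V phi k" unfolding lo_def using assms by (intro sum_mono2) auto
  finally show ?thesis .
qed

lemma card_eq_lo:
  assumes "finite V" and "\<forall>v\<in>V. phi v < n"
  shows "card V = lo V phi n"
proof -
  have "V = (\<Union>j<n. {v\<in>V. phi v = j})" using assms(2) by auto
  then have "card V = card (\<Union>j<n. {v\<in>V. phi v = j})" by simp
  also have "\<dots> = (\<Sum>j<n. card {v\<in>V. phi v = j})"
    using assms(1) by (intro card_UN_disjoint) auto
  finally show ?thesis by (simp add: lo_def ell_def)
qed

lemma compat_bij_block_order:
  assumes "alpha \<in> compat_bij V phi" "u \<in> V" "w \<in> V" "phi u < phi w"
  shows "alpha u < alpha w"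
proof -
  have "alpha u \<le> lo V phi (phi u) + ell V phi (phi u)" "lo V phi (phi w) < alpha w"
    using assms(1-3) unfolding compat_bij_def by auto
  with lo_add_ell_le[OF assms(4), of V phi] show ?thesis by linarith
qed

lemma compat_bij_comp_transpose:
  assumes "alpha \<in> compat_bij V phi" "u \<in> V" "w \<in> V" "phi u = phi w"
  shows "alpha \<circ> Transposition.transpose u w \<in> compat_bij V phi"
proof -
  let ?t = "Transposition.transpose u w"
  have t: "?t v \<in> V" "phi (?t v) = phi v" if "v \<in> V" for v
    using that assms(2-4) by (auto simp: transpose_def)
  have "bij_betw (alpha \<circ> ?t) V {1..card V}"
    using assms(1-3) by (intro bij_betw_trans[of ?t V V]) (auto simp: compat_bij_def)
  moreover have "alpha \<circ> ?t \<in> V \<rightarrow>\<^sub>E UNIV"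
    using assms(1-3) by (auto simp: compat_bij_def PiE_iff extensional_def transpose_def)
  moreover have "lo V phi (phi v) < (alpha \<circ> ?t) v \<and>
      (alpha \<circ> ?t) v \<le> lo V phi (phi v) + ell V phi (phi v)" if "v \<in> V" for v
  proof -
    have "lo V phi (phi (?t v)) < alpha (?t v) \<and>
        alpha (?t v) \<le> lo V phi (phi (?t v)) + ell V phi (phi (?t v))"
      using assms(1) t(1)[OF that] unfolding compat_bij_def by blast
    then show ?thesis using t(2)[OF that] by simp
  qed
  ultimately show ?thesis unfolding compat_bij_def by blast
qed

lemma finite_compat_bij:
  assumes "finite V" shows "finite (compat_bij V phi)"
proof (rule finite_subset)
  show "compat_bij V phi \<subseteq> V \<rightarrow>\<^sub>E {1..card V}"
    unfolding compat_bij_def by (auto dest: bij_betw_apply)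
  show "finite (V \<rightarrow>\<^sub>E {1..card V})" using assms by (simp add: finite_PiE)
qed

text \<open>Fill each block \<open>{v. phi v = j}\<close> bijectively into its interval
  \<open>{lo j + 1 .. lo j + ell j}\<close>; the intervals are consecutive and exhaust \<open>{1..card V}\<close>.\<close>
lemma compat_bij_nonempty:
  assumes "finite V" shows "compat_bij V phi \<noteq> {}"
proof -
  obtain n where n: "\<forall>v\<in>V. phi v < n"
    using finite_imageI[OF assms, of phi] by (auto simp: finite_nat_set_iff_bounded)
  let ?I = "\<lambda>j. {lo V phi j + 1..lo V phi j + ell V phi j}"
  have "\<exists>h. bij_betw h {v\<in>V. phi v = j} (?I j)" for j
    using assms by (intro finite_same_card_bij) (auto simp: ell_def)
  then obtain h where h: "\<And>j. bij_betw (h j) {v\<in>V. phi v = j} (?I j)" by metis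
  define alpha where "alpha = restrict (\<lambda>v. h (phi v) v) V"
  have in_I: "alpha v \<in> ?I (phi v)" if "v \<in> V" for v
    using bij_betw_apply[OF h] that by (simp add: alpha_def)
  have "inj_on alpha V"
  proof (rule inj_onI)
    fix u w assume "u \<in> V" "w \<in> V" "alpha u = alpha w"
    moreover have "phi u = phi w"
      using in_I[OF \<open>u \<in> V\<close>] in_I[OF \<open>w \<in> V\<close>] \<open>alpha u = alpha w\<close>
        lo_add_ell_le[of "phi u" "phi w" V phi] lo_add_ell_le[of "phi w" "phi u" V phi]
      by (cases "phi u" "phi w" rule: linorder_cases) auto
    ultimately show "u = w"
      using bij_betw_imp_inj_on[OF h] by (auto simp: alpha_def inj_on_def)
  qed
  moreover have "alpha ` V \<subseteq> {1..card V}"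
  proof
    fix a assume "a \<in> alpha ` V"
    then obtain v where "v \<in> V" "a = alpha v" by auto
    with in_I[OF \<open>v \<in> V\<close>] lo_add_ell_le[of "phi v" n V phi] n card_eq_lo[OF assms n]
    show "a \<in> {1..card V}" by auto
  qed
  ultimately have "bij_betw alpha V {1..card V}"
    by (simp add: bij_betw_def card_image card_subset_eq)
  then have "alpha \<in> compat_bij V phi"
    using in_I by (force simp: compat_bij_def alpha_def)
  then show ?thesis by auto
qed

definition count_sat :: "'v set \<Rightarrow> ('v \<Rightarrow> nat) \<Rightarrow> 'v constr \<Rightarrow> nat" where
  "count_sat V phi C = card {alpha \<in> compat_bij V phi. satisfies alpha C}"

lemma count_sat_commute: "count_sat V phi (x, y, z) = count_sat V phi (x, z, y)"
  unfolding count_sat_def satisfies_def by (simp add: disj_commute)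

lemma count_sat_partition:
  assumes "finite V" "x \<in> V" "y \<in> V" "z \<in> V" "distinct [x, y, z]"
  shows "count_sat V phi (x, y, z) + count_sat V phi (y, x, z) + count_sat V phi (z, x, y)
    = card (compat_bij V phi)"
proof -
  define B where "B = compat_bij V phi"
  define S where "S C = {alpha \<in> B. satisfies alpha C}" for C
  have values_distinct: "a x \<noteq> a y \<and> a x \<noteq> a z \<and> a y \<noteq> a z" if "a \<in> B" for a
    using that assms(2-5) unfolding B_def compat_bij_def bij_betw_def by (auto dest: inj_onD)
  have "satisfies a (x, y, z) \<or> satisfies a (y, x, z) \<or> satisfies a (z, x, y)" if "a \<in> B" for a
    using values_distinct[OF that] unfolding satisfies_def by simp arith
  then have "B = S (x, y, z) \<union> S (y, x, z) \<union> S (z, x, y)"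
    by (auto simp: S_def)
  moreover have "finite (S C)" for C
    using finite_compat_bij[OF assms(1)] by (simp add: S_def B_def)
  moreover have "S (x, y, z) \<inter> S (y, x, z) = {}" "(S (x, y, z) \<union> S (y, x, z)) \<inter> S (z, x, y) = {}"
    by (auto simp: S_def satisfies_def)
  ultimately have "card B = card (S (x, y, z)) + card (S (y, x, z)) + card (S (z, x, y))"
    by (simp add: card_Un_disjoint)
  then show ?thesis by (simp add: count_sat_def B_def S_def)
qed

lemma count_sat_transpose:
  assumes "x \<in> V" "y \<in> V" "distinct [x, y, z]" "phi x = phi y"
  shows "count_sat V phi (x, y, z) = count_sat V phi (y, x, z)"
proof -
  let ?t = "Transposition.transpose x y"
  have sat: "satisfies (a \<circ> ?t) (x, y, z) \<longleftrightarrow> satisfies a (y, x, z)"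
    "satisfies (a \<circ> ?t) (y, x, z) \<longleftrightarrow> satisfies a (x, y, z)" for a
    using assms(3) by (auto simp: satisfies_def)
  have "bij_betw (\<lambda>a. a \<circ> ?t) {a \<in> compat_bij V phi. satisfies a (y, x, z)}
      {a \<in> compat_bij V phi. satisfies a (x, y, z)}"
    by (rule bij_betw_byWitness[where f'="\<lambda>a. a \<circ> ?t"])
      (auto simp: o_assoc sat compat_bij_comp_transpose assms)
  then show ?thesis unfolding count_sat_def by (simp add: bij_betw_same_card)
qed

lemma count_sat_extreme:
  assumes "x \<in> V" "y \<in> V" "z \<in> V"
    and "(phi x < phi y \<and> phi x < phi z) \<or> (phi y < phi x \<and> phi z < phi x)"
  shows "count_sat V phi (x, y, z) = 0"
proof -
  have "\<not> satisfies a (x, y, z)" if "a \<in> compat_bij V phi" for a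
    using assms compat_bij_block_order[OF that] unfolding satisfies_def by fastforce
  then have "{a \<in> compat_bij V phi. satisfies a (x, y, z)} = {}" by blast
  then show ?thesis unfolding count_sat_def by (metis card.empty)
qed

definition between_prob :: "nat \<Rightarrow> nat \<Rightarrow> nat \<Rightarrow> real" where
  "between_prob i j k =
     (if i = j \<and> i = k then 1/3 else if i = j \<or> i = k then 1/2
      else if (j < i \<and> i < k) \<or> (k < i \<and> i < j) then 1 else 0)"

lemma wC_eq_between_prob:
  assumes "finite V" "x \<in> V" "y \<in> V" "z \<in> V" "distinct [x, y, z]"
  shows "wC V phi (x, y, z) = between_prob (phi x) (phi y) (phi z) - 1/3"
proof -
  define N where "N = real (card (compat_bij V phi))"
  define K where "K C = real (count_sat V phi C)" for C
  have "N > 0"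
    using finite_compat_bij[OF assms(1)] compat_bij_nonempty[OF assms(1)]
    by (simp add: N_def card_gt_0_iff)
  have partition: "K (x, y, z) + K (y, x, z) + K (z, x, y) = N"
    using count_sat_partition[OF assms, of phi] unfolding K_def N_def by linarith
  have K_commute: "K (u, v, w) = K (u, w, v)" for u v w
    unfolding K_def by (simp add: count_sat_commute)
  have "K (x, y, z) = between_prob (phi x) (phi y) (phi z) * N"
  proof -
    consider (all) "phi x = phi y" "phi x = phi z"
      | (xy) "phi x = phi y" "phi x \<noteq> phi z"
      | (xz) "phi x \<noteq> phi y" "phi x = phi z"
      | (between) "phi x \<noteq> phi y" "phi x \<noteq> phi z"
          "(phi y < phi x \<and> phi x < phi z) \<or> (phi z < phi x \<and> phi x < phi y)"
      | (outside) "phi x \<noteq> phi y" "phi x \<noteq> phi z"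
          "\<not> ((phi y < phi x \<and> phi x < phi z) \<or> (phi z < phi x \<and> phi x < phi y))"
      by blast
    then show ?thesis
    proof cases
      case all
      have "K (x, y, z) = K (y, x, z)" "K (x, z, y) = K (z, x, y)"
        using all assms(2-5) unfolding K_def by (auto intro!: count_sat_transpose)
      then show ?thesis using all partition K_commute[of x y z] by (simp add: between_prob_def)
    next
      case xy
      have "K (x, y, z) = K (y, x, z)" "K (z, x, y) = 0"
        using xy assms(2-5) unfolding K_def
        by (auto intro!: count_sat_transpose count_sat_extreme)
      then show ?thesis using xy partition by (simp add: between_prob_def)
    next
      case xz
      have "K (x, z, y) = K (z, x, y)" "K (y, x, z) = 0"
        using xz assms(2-5) unfolding K_def
        by (auto intro!: count_sat_transpose count_sat_extreme)
      then show ?thesis using xz partition K_commute[of x y z] by (simp add: between_prob_def)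
    next
      case between
      have "K (y, x, z) = 0" "K (z, x, y) = 0"
        using between assms(2-4) unfolding K_def by (auto intro!: count_sat_extreme)
      then show ?thesis using between partition by (simp add: between_prob_def)
    next
      case outside
      have "K (x, y, z) = 0"
        using outside assms(2-4) unfolding K_def by (auto intro!: count_sat_extreme)
      then show ?thesis using outside by (auto simp: between_prob_def)
    qed
  qed
  with \<open>N > 0\<close> show ?thesis
    unfolding wC_def by (simp add: K_def N_def count_sat_def field_simps)
qed

text \<open>A label in \<open>{0..3}\<close> is encoded by the signs of its two binary digits; the high
  digit sits at \<open>True\<close>.\<close>
definition bit_sign :: "nat \<Rightarrow> bool \<Rightarrow> real" where
  "bit_sign n b = (if odd (if b then n div 2 else n) then 1 else -1)"

definition encode :: "'v set \<Rightarrow> ('v \<Rightarrow> nat) \<Rightarrow> 'v \<times> bool \<Rightarrow> real" where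
  "encode V phi = restrict (\<lambda>(v, b). bit_sign (phi v) b) (V \<times> UNIV)"

definition decode :: "'v set \<Rightarrow> ('v \<times> bool \<Rightarrow> real) \<Rightarrow> 'v \<Rightarrow> nat" where
  "decode V e =
     restrict (\<lambda>v. (if e (v, True) = 1 then 2 else 0) + (if e (v, False) = 1 then 1 else 0)) V"

lemma decode_encode:
  fixes V :: "'v set"
  assumes "phi \<in> V \<rightarrow>\<^sub>E {0..3}" shows "decode V (encode V phi) = phi"
proof
  fix v show "decode V (encode V phi) v = phi v"
  proof (cases "v \<in> V")
    case True
    with assms have "phi v \<in> {0, 1, 2, 3}" by (auto simp: PiE_iff)
    with True show ?thesis by (auto simp: decode_def encode_def bit_sign_def)
  next
    case False
    then show ?thesis by (simp add: decode_def PiE_arb[OF assms False])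
  qed
qed

lemma encode_decode:
  fixes V :: "'v set"
  assumes "e \<in> (V \<times> UNIV) \<rightarrow>\<^sub>E {-1, 1}" shows "encode V (decode V e) = e"
proof
  fix i :: "'v \<times> bool"
  obtain v b where i: "i = (v, b)" by (cases i)
  show "encode V (decode V e) i = e i"
  proof (cases "v \<in> V")
    case True
    with assms have "e (v, True) \<in> {-1, 1}" "e (v, False) \<in> {-1, 1}" by (auto simp: PiE_iff)
    with True i show ?thesis by (cases b) (auto simp: decode_def encode_def bit_sign_def)
  next
    case False
    then have "i \<notin> V \<times> UNIV" using i by simp
    then show ?thesis by (simp add: encode_def PiE_arb[OF assms])
  qed
qed

lemma bij_betw_encode: "bij_betw (encode V) (V \<rightarrow>\<^sub>E {0..3}) ((V \<times> UNIV) \<rightarrow>\<^sub>E {-1, 1})"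
proof (rule bij_betw_byWitness[where f'="decode V"])
  show "\<forall>phi\<in>V \<rightarrow>\<^sub>E {0..3}. decode V (encode V phi) = phi" using decode_encode by blast
  show "\<forall>e\<in>(V \<times> UNIV) \<rightarrow>\<^sub>E {-1, 1}. encode V (decode V e) = e" using encode_decode by blast
  show "encode V ` (V \<rightarrow>\<^sub>E {0..3}) \<subseteq> (V \<times> UNIV) \<rightarrow>\<^sub>E {-1, 1}"
    by (auto simp: encode_def bit_sign_def split: if_splits)
  show "decode V ` ((V \<times> UNIV) \<rightarrow>\<^sub>E {-1, 1}) \<subseteq> V \<rightarrow>\<^sub>E {0..3}"
    by (auto simp: decode_def)
qed

lemma wC_multilinear:
  assumes "finite V" "x \<in> V" "y \<in> V" "z \<in> V" "distinct [x, y, z]"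
  shows "multilinear_le (V \<times> UNIV) 6 (encode V) (V \<rightarrow>\<^sub>E {0..3}) (\<lambda>phi. wC V phi (x, y, z))"
proof (rule multilinear_le_of_depends_on[where T="{x, y, z} \<times> UNIV"])
  show "finite (V \<times> (UNIV :: bool set))" "{x, y, z} \<times> UNIV \<subseteq> V \<times> UNIV"
    using assms(1-4) by auto
  show "card ({x, y, z} \<times> (UNIV :: bool set)) \<le> 6"
    using assms(5) by (simp add: card_cartesian_product)
  show "encode V phi i \<in> {-1, 1}" if "i \<in> {x, y, z} \<times> UNIV" for phi i
    using that assms(2-4) by (auto simp: encode_def bit_sign_def split: if_splits)
  let ?g = "\<lambda>e. between_prob (decode V e x) (decode V e y) (decode V e z) - 1/3"
  show "?g e = ?g e'" if "\<forall>i\<in>{x, y, z} \<times> UNIV. e i = e' i" for e e'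
    using that by (simp add: decode_def)
  show "wC V phi (x, y, z) = ?g (encode V phi)" if "phi \<in> V \<rightarrow>\<^sub>E {0..3}" for phi
    using wC_eq_between_prob[OF assms] decode_encode[OF that] by simp
qed

theorem lemma6:
  fixes V :: "'v set" and Cs :: "'v constr list"
  assumes "finite V"
    and "\<forall>(vi, vj, vk) \<in> set Cs. vi \<in> V \<and> vj \<in> V \<and> vk \<in> V \<and> distinct [vi, vj, vk]"
  shows "\<exists>(I :: ('v \<times> bool) set) (enc :: ('v \<Rightarrow> nat) \<Rightarrow> ('v \<times> bool \<Rightarrow> real))
            (c :: ('v \<times> bool) set \<Rightarrow> real).
           finite I \<and>
           bij_betw enc (V \<rightarrow>\<^sub>E {0..3}) (I \<rightarrow>\<^sub>E {-1, 1}) \<and>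
           (\<forall>phi \<in> V \<rightarrow>\<^sub>E {0..3}.
              wCs V phi Cs = (\<Sum>S \<in> {S. S \<subseteq> I \<and> card S \<le> 6}. c S * (\<Prod>i\<in>S. enc phi i)))"
proof -
  have "multilinear_le (V \<times> UNIV) 6 (encode V) (V \<rightarrow>\<^sub>E {0..3}) (\<lambda>phi. \<Sum>C\<leftarrow>Cs. wC V phi C)"
  proof (intro multilinear_le_sum_list ballI)
    fix C assume "C \<in> set Cs"
    moreover obtain x y z where "C = (x, y, z)" by (cases C)
    ultimately have "x \<in> V" "y \<in> V" "z \<in> V" "distinct [x, y, z]" using assms(2) by auto
    with \<open>C = (x, y, z)\<close> show "multilinear_le (V \<times> UNIV) 6 (encode V) (V \<rightarrow>\<^sub>E {0..3}) (\<lambda>phi. wC V phi C)"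
      using wC_multilinear[OF assms(1)] by simp
  qed
  then obtain c where "\<forall>phi \<in> V \<rightarrow>\<^sub>E {0..3}. wCs V phi Cs
      = (\<Sum>S \<in> {S. S \<subseteq> V \<times> UNIV \<and> card S \<le> 6}. c S * (\<Prod>i\<in>S. encode V phi i))"
    unfolding multilinear_le_def wCs_def by blast
  moreover have "finite (V \<times> (UNIV :: bool set))" using assms(1) by simp
  ultimately show ?thesis using bij_betw_encode by blast
qed

end
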